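(* Let $k\ge 1$ be an integer and let $G$ be a finite simple graph with $\gamma^d_k(G)<\infty$. Let $S$ be a global defensive $k$-alliance in $G$ with $|S|=\gamma^d_k(G)$, and suppose that the induced subgraph $G\langle S\rangle$ has a $1$-perfect code. Let $H$ be a finite simple graph with at least two vertices. Then $G[H]$ has a global defensive $k$-alliance. Moreover, if $k\ge 2$, then $$\gamma^d_k(G[H])\leq n(H)\big(\gamma^d_k(G)-\gamma(G\langle S\rangle)\big)+\gamma(G\langle S\rangle),$$ where $\gamma(G\langle S\rangle)$ is the domination number of $G\langle S\rangle$.
   Context: All graphs are finite and simple; $n(H)=|V_H|$. For $S\subseteq V_G$ and $v\in V_G$, $N_S(v)=\{u\in S: uv\in E_G\}$ and $\bar S=V_G\setminus S$. For an integer $k$, a nonempty $S\subseteq V_G$ is a global defensive $k$-alliance in $G$ if every vertex outside $S$ has a neighbor in $S$ and $|N_S(v)|\ge |N_{\bar S}(v)|+k$ for every $v\in S$; $\gamma^d_k(G)$ is the minimum size of such a set ($\infty$ if none exists). $G\langle S\rangle$ is the subgraph of $G$ induced by $S$. A $1$-perfect code in a graph $F$ is a set $D\subseteq V_F$ such that the closed neighborhoods $N[x]=\{x\}\cup N(x)$, $x\in D$, partition $V_F$. The domination number $\gamma(F)$ is the minimum size of a dominating set of $F$. The lexicographic product $G[H]$ has vertex set $V_G\times V_H$, with $(g_1,h_1)\sim(g_2,h_2)$ iff $g_1g_2\in E_G$, or $g_1=g_2$ and $h_1h_2\in E_H$. *)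

theory Defs
  imports Main "HOL-Library.Extended_Nat"
begin

definition simple_graph :: "'a set \<Rightarrow> ('a \<Rightarrow> 'a \<Rightarrow> bool) \<Rightarrow> bool" where
  "simple_graph V E \<longleftrightarrow> finite V \<and> (\<forall>u v. E u v \<longrightarrow> u \<in> V \<and> v \<in> V)
     \<and> (\<forall>u v. E u v \<longrightarrow> E v u) \<and> (\<forall>u. \<not> E u u)"

definition nbhd_in :: "('a \<Rightarrow> 'a \<Rightarrow> bool) \<Rightarrow> 'a set \<Rightarrow> 'a \<Rightarrow> 'a set" where
  "nbhd_in E S v = {u \<in> S. E u v}"

definition global_def_alliance :: "'a set \<Rightarrow> ('a \<Rightarrow> 'a \<Rightarrow> bool) \<Rightarrow> int \<Rightarrow> 'a set \<Rightarrow> bool" where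
  "global_def_alliance V E k S \<longleftrightarrow> S \<noteq> {} \<and> S \<subseteq> V
     \<and> (\<forall>v \<in> V - S. \<exists>u \<in> S. E u v)
     \<and> (\<forall>v \<in> S. int (card (nbhd_in E S v)) \<ge> int (card (nbhd_in E (V - S) v)) + k)"

text \<open>gamma^d_k(G); infinity if no global defensive k-alliance exists (Inf {} = \<infinity>).\<close>
definition gamma_d :: "'a set \<Rightarrow> ('a \<Rightarrow> 'a \<Rightarrow> bool) \<Rightarrow> int \<Rightarrow> enat" where
  "gamma_d V E k = (INF S \<in> {S. global_def_alliance V E k S}. enat (card S))"

definition induced_edges :: "('a \<Rightarrow> 'a \<Rightarrow> bool) \<Rightarrow> 'a set \<Rightarrow> 'a \<Rightarrow> 'a \<Rightarrow> bool" where
  "induced_edges E S u v \<longleftrightarrow> u \<in> S \<and> v \<in> S \<and> E u v"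

definition closed_nbhd :: "'a set \<Rightarrow> ('a \<Rightarrow> 'a \<Rightarrow> bool) \<Rightarrow> 'a \<Rightarrow> 'a set" where
  "closed_nbhd V E x = insert x {u \<in> V. E x u}"

definition perfect_code :: "'a set \<Rightarrow> ('a \<Rightarrow> 'a \<Rightarrow> bool) \<Rightarrow> 'a set \<Rightarrow> bool" where
  "perfect_code V E D \<longleftrightarrow> D \<subseteq> V \<and> (\<forall>v \<in> V. \<exists>!x. x \<in> D \<and> v \<in> closed_nbhd V E x)"

definition dominating :: "'a set \<Rightarrow> ('a \<Rightarrow> 'a \<Rightarrow> bool) \<Rightarrow> 'a set \<Rightarrow> bool" where
  "dominating V E D \<longleftrightarrow> D \<subseteq> V \<and> (\<forall>v \<in> V - D. \<exists>u \<in> D. E u v)"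

definition domination_number :: "'a set \<Rightarrow> ('a \<Rightarrow> 'a \<Rightarrow> bool) \<Rightarrow> nat" where
  "domination_number V E = Min (card ` {D. dominating V E D})"

definition lex_edges :: "('a \<Rightarrow> 'a \<Rightarrow> bool) \<Rightarrow> ('b \<Rightarrow> 'b \<Rightarrow> bool) \<Rightarrow> 'a \<times> 'b \<Rightarrow> 'a \<times> 'b \<Rightarrow> bool" where
  "lex_edges EG EH p q \<longleftrightarrow> EG (fst p) (fst q) \<or> (fst p = fst q \<and> EH (snd p) (snd q))"

end

theory Submission
  imports Defs
begin

text \<open>Blowing every vertex of a global defensive k-alliance S of G up into a copy of H gives
  the alliance S \<times> V_H of G[H]: each vertex of S gains n(H) times as many neighbours inside
  as outside. To save vertices, take a 1-perfect code D of G\<langle>S\<rangle> and keep only one copy (x, h0)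
  of each x \<in> D. Every vertex y \<in> S lies in the closed neighbourhood of exactly one x \<in> D, so
  a vertex (y, h) of the new set loses at most n(H) - 1 neighbours inside and gains at most
  n(H) - 1 outside; for k \<ge> 2 the scaled margin k n(H) absorbs this loss of 2(n(H) - 1).\<close>

lemma margin_scale:
  fixes a b k n :: int
  assumes "b + k \<le> a" "0 \<le> k" "1 \<le> n"
  shows "b * n + k \<le> a * n"
proof -
  have "0 \<le> (a - b - k) * n" "0 \<le> k * (n - 1)" using assms by simp_all
  then show ?thesis by (simp add: algebra_simps)
qed

lemma margin_scale_minus:
  fixes a b k n :: int
  assumes "b + k \<le> a" "2 \<le> k" "1 \<le> n"
  shows "b * n + (n - 1) + k \<le> a * n - (n - 1)"
proof -
  have "0 \<le> (a - b - k) * n" "0 \<le> (k - 2) * (n - 1)" using assms by simp_all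
  then show ?thesis by (simp add: algebra_simps)
qed

lemma gamma_d_le_card:
  assumes "global_def_alliance V E k T"
  shows "gamma_d V E k \<le> enat (card T)"
  unfolding gamma_d_def using assms by (intro INF_lower) auto

lemma domination_number_le_card:
  assumes "finite V" "dominating V E D"
  shows "domination_number V E \<le> card D"
proof -
  have "{D. dominating V E D} \<subseteq> Pow V" unfolding dominating_def by auto
  then have "finite (card ` {D. dominating V E D})"
    using assms(1) by (meson finite_Pow_iff finite_imageI finite_subset)
  then show ?thesis unfolding domination_number_def using assms(2) by (intro Min_le) auto
qed

lemma nbhd_in_finite: "finite X \<Longrightarrow> finite (nbhd_in E X v)"
  unfolding nbhd_in_def by simp

lemma nbhd_in_Un: "nbhd_in E (X \<union> Y) v = nbhd_in E X v \<union> nbhd_in E Y v"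
  unfolding nbhd_in_def by auto

lemma perfect_code_unique:
  assumes "perfect_code V E D" "v \<in> V" "x \<in> D" "x' \<in> D"
    and "v \<in> closed_nbhd V E x" "v \<in> closed_nbhd V E x'"
  shows "x = x'"
  using assms unfolding perfect_code_def by blast

lemma perfect_code_dominating:
  assumes "perfect_code V E D"
  shows "dominating V E D"
  using assms unfolding perfect_code_def dominating_def closed_nbhd_def by fastforce

lemma closed_nbhd_induced_iff:
  "v \<in> closed_nbhd S (induced_edges E S) x \<longleftrightarrow> v = x \<or> (x \<in> S \<and> v \<in> S \<and> E x v)"
  unfolding closed_nbhd_def induced_edges_def by auto

lemma lex_blowup_nbhd_bounds:
  assumes "finite VG" "finite VH" "S \<subseteq> VG" "y \<in> S"
  shows "card (nbhd_in EG S y) * card VH \<le> card (nbhd_in (lex_edges EG EH) (S \<times> VH) (y, h))"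
    and "card (nbhd_in (lex_edges EG EH) (VG \<times> VH - S \<times> VH) (y, h))
           = card (nbhd_in EG (VG - S) y) * card VH"
proof -
  have "nbhd_in EG S y \<times> VH \<subseteq> nbhd_in (lex_edges EG EH) (S \<times> VH) (y, h)"
    unfolding nbhd_in_def lex_edges_def by auto
  moreover have "finite (nbhd_in (lex_edges EG EH) (S \<times> VH) (y, h))"
    using assms by (intro nbhd_in_finite) (auto intro: finite_subset)
  ultimately show "card (nbhd_in EG S y) * card VH \<le> card (nbhd_in (lex_edges EG EH) (S \<times> VH) (y, h))"
    by (metis card_cartesian_product card_mono)
  have "nbhd_in (lex_edges EG EH) (VG \<times> VH - S \<times> VH) (y, h) = nbhd_in EG (VG - S) y \<times> VH"
    using assms(4) unfolding nbhd_in_def lex_edges_def by auto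
  then show "card (nbhd_in (lex_edges EG EH) (VG \<times> VH - S \<times> VH) (y, h))
           = card (nbhd_in EG (VG - S) y) * card VH"
    by (simp add: card_cartesian_product)
qed

lemma global_def_alliance_lex_blowup:
  assumes S: "global_def_alliance VG EG k S" and "0 \<le> k"
    and "finite VG" "finite VH" "VH \<noteq> {}"
  shows "global_def_alliance (VG \<times> VH) (lex_edges EG EH) k (S \<times> VH)"
  unfolding global_def_alliance_def
proof (intro conjI ballI)
  show "S \<times> VH \<noteq> {}" "S \<times> VH \<subseteq> VG \<times> VH"
    using S \<open>VH \<noteq> {}\<close> unfolding global_def_alliance_def by auto
next
  fix p assume "p \<in> VG \<times> VH - S \<times> VH"
  then show "\<exists>q \<in> S \<times> VH. lex_edges EG EH q p"
    using S unfolding global_def_alliance_def lex_edges_def by (cases p) fastforce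
next
  fix p assume "p \<in> S \<times> VH"
  then obtain y h where p: "p = (y, h)" "y \<in> S" by auto
  have "S \<subseteq> VG" and margin: "int (card (nbhd_in EG (VG - S) y)) + k \<le> int (card (nbhd_in EG S y))"
    using S p(2) unfolding global_def_alliance_def by auto
  have "1 \<le> card VH" using assms by (simp add: Suc_le_eq card_gt_0_iff)
  then show "int (card (nbhd_in (lex_edges EG EH) (VG \<times> VH - S \<times> VH) p)) + k
             \<le> int (card (nbhd_in (lex_edges EG EH) (S \<times> VH) p))"
    using margin_scale[OF margin \<open>0 \<le> k\<close>, of "int (card VH)"]
      lex_blowup_nbhd_bounds[OF assms(3,4) \<open>S \<subseteq> VG\<close> p(2), of EG EH h]
    unfolding p(1) by (simp flip: of_nat_mult)
qed

lemma card_nbhd_in_lex_code_le: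
  assumes code: "perfect_code S (induced_edges EG S) D"
    and "finite VH" "h0 \<in> VH" "y \<in> S"
  shows "card (nbhd_in (lex_edges EG EH) (D \<times> (VH - {h0})) (y, h)) \<le> card VH - 1"
proof -
  obtain x where x: "x \<in> D" "y \<in> closed_nbhd S (induced_edges EG S) x"
    using code \<open>y \<in> S\<close> unfolding perfect_code_def by blast
  have "D \<subseteq> S" using code unfolding perfect_code_def by simp
  have "nbhd_in (lex_edges EG EH) (D \<times> (VH - {h0})) (y, h) \<subseteq> {x} \<times> (VH - {h0})"
  proof
    fix q assume q: "q \<in> nbhd_in (lex_edges EG EH) (D \<times> (VH - {h0})) (y, h)"
    obtain u h' where q_eq: "q = (u, h')" by (cases q)
    have u: "u \<in> D" "h' \<in> VH - {h0}" "EG u y \<or> u = y"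
      using q unfolding q_eq nbhd_in_def lex_edges_def by auto
    then have "y \<in> closed_nbhd S (induced_edges EG S) u"
      using \<open>D \<subseteq> S\<close> \<open>y \<in> S\<close> by (auto simp: closed_nbhd_induced_iff)
    then have "u = x" by (rule perfect_code_unique[OF code \<open>y \<in> S\<close> u(1) x(1) _ x(2)])
    then show "q \<in> {x} \<times> (VH - {h0})" using u(2) q_eq by simp
  qed
  then show ?thesis
    using \<open>finite VH\<close> \<open>h0 \<in> VH\<close> by (metis card_mono card_cartesian_product_singleton
        card_Diff_singleton finite_Diff finite_SigmaI finite.emptyI finite.insertI)
qed

lemma lex_code_dominating:
  assumes S: "global_def_alliance VG EG k S" and "1 \<le> k" "\<forall>u. \<not> EG u u" "h0 \<in> VH"
    and code: "perfect_code S (induced_edges EG S) D"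
  defines "T \<equiv> (S - D) \<times> VH \<union> D \<times> {h0}"
  shows "\<forall>p \<in> VG \<times> VH - T. \<exists>q \<in> T. lex_edges EG EH q p"
proof
  fix p assume p: "p \<in> VG \<times> VH - T"
  then obtain g h where gh: "p = (g, h)" "g \<in> VG" "h \<in> VH" by auto
  have "D \<subseteq> S" using code unfolding perfect_code_def by simp
  obtain u where u: "u \<in> S" "EG u g" "g \<in> D \<longrightarrow> u \<notin> D"
  proof (cases "g \<in> S")
    case False
    then obtain u where "u \<in> S" "EG u g"
      using S gh(2) unfolding global_def_alliance_def by blast
    then show ?thesis using that False \<open>D \<subseteq> S\<close> by blast
  next
    case True
    have "int (card (nbhd_in EG (VG - S) g)) + k \<le> int (card (nbhd_in EG S g))"
      using S True unfolding global_def_alliance_def by blast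
    then have "nbhd_in EG S g \<noteq> {}" using \<open>1 \<le> k\<close> by auto
    then obtain u where "u \<in> S" "EG u g" unfolding nbhd_in_def by blast
    moreover have "u \<notin> D" if "g \<in> D"
    proof
      assume "u \<in> D"
      have "g \<in> closed_nbhd S (induced_edges EG S) u" "g \<in> closed_nbhd S (induced_edges EG S) g"
        using \<open>u \<in> S\<close> \<open>EG u g\<close> True by (simp_all add: closed_nbhd_induced_iff)
      then have "u = g" by (rule perfect_code_unique[OF code True \<open>u \<in> D\<close> that])
      then show False using \<open>EG u g\<close> assms(3) by simp
    qed
    ultimately show ?thesis using that by blast
  qed
  have "g \<in> S \<longrightarrow> g \<in> D" using p gh unfolding T_def by auto
  then have q: "(if u \<in> D then (u, h0) else (u, h)) \<in> T"
    using u gh \<open>h0 \<in> VH\<close> unfolding T_def by auto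
  show "\<exists>q \<in> T. lex_edges EG EH q p"
    using u(2) gh(1) unfolding lex_edges_def by (intro bexI[OF _ q]) simp
qed

lemma lex_code_margin:
  assumes S: "global_def_alliance VG EG k S" and "2 \<le> k" "finite VG" "finite VH" "h0 \<in> VH"
    and code: "perfect_code S (induced_edges EG S) D"
  defines "T \<equiv> (S - D) \<times> VH \<union> D \<times> {h0}"
  assumes "p \<in> T"
  shows "int (card (nbhd_in (lex_edges EG EH) (VG \<times> VH - T) p)) + k
           \<le> int (card (nbhd_in (lex_edges EG EH) T p))"
proof -
  let ?N = "nbhd_in (lex_edges EG EH)" and ?R = "D \<times> (VH - {h0})" and ?n = "int (card VH)"
  obtain y h where p: "p = (y, h)" "y \<in> S" using \<open>p \<in> T\<close> code
    unfolding T_def perfect_code_def by auto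
  have "D \<subseteq> S" "S \<subseteq> VG" using code S unfolding perfect_code_def global_def_alliance_def by auto
  then have T_eq: "T = S \<times> VH - ?R" and out_eq: "VG \<times> VH - T = (VG \<times> VH - S \<times> VH) \<union> ?R"
    using \<open>h0 \<in> VH\<close> unfolding T_def by auto
  have fin: "finite (?N X p)" if "X \<subseteq> VG \<times> VH" for X
    using that assms(3,4) by (intro nbhd_in_finite) (auto intro: finite_subset)
  have "T \<subseteq> VG \<times> VH" "?R \<subseteq> VG \<times> VH"
    using \<open>D \<subseteq> S\<close> \<open>S \<subseteq> VG\<close> unfolding T_eq by auto
  then have "finite (?N T p \<union> ?N ?R p)" using fin by blast
  moreover have "?N (S \<times> VH) p \<subseteq> ?N T p \<union> ?N ?R p"
    unfolding T_eq nbhd_in_def by auto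
  ultimately have "card (?N (S \<times> VH) p) \<le> card (?N T p \<union> ?N ?R p)"
    by (rule card_mono)
  then have inside: "card (?N (S \<times> VH) p) \<le> card (?N T p) + card (?N ?R p)"
    using card_Un_le order_trans by blast
  have outside: "card (?N (VG \<times> VH - T) p) \<le> card (?N (VG \<times> VH - S \<times> VH) p) + card (?N ?R p)"
    unfolding out_eq nbhd_in_Un by (rule card_Un_le)
  have lost: "card (?N ?R p) \<le> card VH - 1"
    using card_nbhd_in_lex_code_le[OF code assms(4,5) p(2)] p(1) by simp
  have "1 \<le> card VH" using assms(4,5) by (auto simp: Suc_le_eq card_gt_0_iff)
  then have lost': "int (card (?N ?R p)) \<le> ?n - 1" using lost by linarith
  have margin: "int (card (nbhd_in EG (VG - S) y)) + k \<le> int (card (nbhd_in EG S y))"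
    using S p(2) unfolding global_def_alliance_def by auto
  note bounds = lex_blowup_nbhd_bounds[OF assms(3,4) \<open>S \<subseteq> VG\<close> p(2), of EG EH h, folded p(1)]
  have "int (card (nbhd_in EG S y)) * ?n \<le> int (card (?N T p)) + int (card (?N ?R p))"
    using bounds(1) inside by (simp flip: of_nat_mult)
  moreover have "int (card (?N (VG \<times> VH - T) p))
                   \<le> int (card (nbhd_in EG (VG - S) y)) * ?n + int (card (?N ?R p))"
    using bounds(2) outside by (simp flip: of_nat_mult)
  ultimately show ?thesis
    using margin_scale_minus[OF margin \<open>2 \<le> k\<close>, of ?n] lost' \<open>1 \<le> card VH\<close> by linarith
qed

lemma global_def_alliance_lex_code:
  assumes S: "global_def_alliance VG EG k S" and "2 \<le> k" "simple_graph VG EG"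
    and "finite VH" "h0 \<in> VH" and code: "perfect_code S (induced_edges EG S) D"
  shows "global_def_alliance (VG \<times> VH) (lex_edges EG EH) k ((S - D) \<times> VH \<union> D \<times> {h0})"
proof -
  have "finite VG" "\<forall>u. \<not> EG u u" using \<open>simple_graph VG EG\<close> unfolding simple_graph_def by auto
  moreover have "(S - D) \<times> VH \<union> D \<times> {h0} \<noteq> {}" "(S - D) \<times> VH \<union> D \<times> {h0} \<subseteq> VG \<times> VH"
    using S code \<open>h0 \<in> VH\<close> unfolding global_def_alliance_def perfect_code_def by auto
  ultimately show ?thesis
    unfolding global_def_alliance_def
    using lex_code_dominating[OF S _ _ \<open>h0 \<in> VH\<close> code] lex_code_margin[OF S \<open>2 \<le> k\<close> _ assms(4,5) code]
      \<open>2 \<le> k\<close> by simp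
qed

lemma card_lex_code:
  assumes "finite S" "D \<subseteq> S" "finite VH" "h0 \<in> VH"
  shows "card ((S - D) \<times> VH \<union> D \<times> {h0}) = card VH * (card S - card D) + card D"
proof -
  have "finite D" using assms(1,2) finite_subset by blast
  then have "card ((S - D) \<times> VH \<union> D \<times> {h0}) = card ((S - D) \<times> VH) + card (D \<times> {h0})"
    using assms by (intro card_Un_disjoint) auto
  then show ?thesis using assms \<open>finite D\<close> by (simp add: card_Diff_subset card_cartesian_product)
qed

lemma blowup_size_mono:
  fixes n s d g :: nat
  assumes "g \<le> d" "d \<le> s" "1 \<le> n"
  shows "n * (s - d) + d \<le> n * (s - g) + g"
proof -
  have "n * (s - g) = n * (s - d) + n * (d - g)" using assms by (simp add: diff_mult_distrib2)
  moreover have "d - g \<le> n * (d - g)" using assms(3) by simp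
  ultimately show ?thesis using assms by linarith
qed

theorem mainTheorem4:
  fixes VG :: "'a set" and EG :: "'a \<Rightarrow> 'a \<Rightarrow> bool"
    and VH :: "'b set" and EH :: "'b \<Rightarrow> 'b \<Rightarrow> bool"
    and k :: int and S :: "'a set"
  assumes "k \<ge> 1"
    and "simple_graph VG EG"
    and "gamma_d VG EG k < \<infinity>"
    and "global_def_alliance VG EG k S"
    and "enat (card S) = gamma_d VG EG k"
    and "\<exists>D. perfect_code S (induced_edges EG S) D"
    and "simple_graph VH EH"
    and "card VH \<ge> 2"
  shows "(\<exists>T. global_def_alliance (VG \<times> VH) (lex_edges EG EH) k T)
    \<and> (k \<ge> 2 \<longrightarrow>
        gamma_d (VG \<times> VH) (lex_edges EG EH) k
          \<le> enat (card VH * (card S - domination_number S (induced_edges EG S))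
                  + domination_number S (induced_edges EG S)))"
proof (intro conjI impI)
  have "finite VG" using assms(2) unfolding simple_graph_def by simp
  have "finite VH" "VH \<noteq> {}" using assms(8) card.infinite by fastforce+
  then obtain h0 where "h0 \<in> VH" by blast
  obtain D where code: "perfect_code S (induced_edges EG S) D" using assms(6) by blast
  have "D \<subseteq> S" "finite S"
    using code assms(4) \<open>finite VG\<close> finite_subset
    unfolding perfect_code_def global_def_alliance_def by auto
  show "\<exists>T. global_def_alliance (VG \<times> VH) (lex_edges EG EH) k T"
    using global_def_alliance_lex_blowup[OF assms(4) _ \<open>finite VG\<close> \<open>finite VH\<close> \<open>VH \<noteq> {}\<close>]
      assms(1) by auto
  assume "2 \<le> k"
  let ?\<gamma> = "domination_number S (induced_edges EG S)"
  have "?\<gamma> \<le> card D"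
    using domination_number_le_card[OF \<open>finite S\<close> perfect_code_dominating[OF code]] .
  moreover have "card D \<le> card S" using \<open>D \<subseteq> S\<close> \<open>finite S\<close> card_mono by blast
  moreover have "1 \<le> card VH" using assms(8) by simp
  ultimately have size: "card VH * (card S - card D) + card D \<le> card VH * (card S - ?\<gamma>) + ?\<gamma>"
    by (rule blowup_size_mono)
  have "gamma_d (VG \<times> VH) (lex_edges EG EH) k \<le> enat (card ((S - D) \<times> VH \<union> D \<times> {h0}))"
    by (intro gamma_d_le_card global_def_alliance_lex_code[OF assms(4) \<open>2 \<le> k\<close> assms(2)
          \<open>finite VH\<close> \<open>h0 \<in> VH\<close> code])
  also have "\<dots> \<le> enat (card VH * (card S - ?\<gamma>) + ?\<gamma>)"
    using size card_lex_code[OF \<open>finite S\<close> \<open>D \<subseteq> S\<close> \<open>finite VH\<close> \<open>h0 \<in> VH\<close>] by simp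
  finally show "gamma_d (VG \<times> VH) (lex_edges EG EH) k \<le> enat (card VH * (card S - ?\<gamma>) + ?\<gamma>)" .
qed

end
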